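(* Let $A,B\in\mathbb{R}^{n\times n}$ be symmetric matrices and suppose $I_{\succeq}(A,B)\neq\emptyset$. If $I_{\succeq}(A,B)$ is a single-point set, then $B$ is indefinite and $I_{\succ}(A,B)=\emptyset$. Otherwise, $I_{\succeq}(A,B)$ is an interval and (a) $Q(A)\cap Q(B)=N(A)\cap N(B)$; (b) $N(A+\sigma B)=N(A)\cap N(B)$ for every $\sigma$ in the interior of $I_{\succeq}(A,B)$; (c) $A$ and $B$ are simultaneously diagonalizable via congruence.
   Context: For symmetric $A,B$: $I_{\succ}(A,B)=\{\sigma\in\mathbb{R}: A+\sigma B\succ 0\}$ (positive definite), $I_{\succeq}(A,B)=\{\sigma\in\mathbb{R}: A+\sigma B\succeq 0\}$ (positive semidefinite), $Q(A)=\{v\in\mathbb{R}^n: v^TAv=0\}$, $N(A)=\{v: Av=0\}$. $A$ and $B$ are simultaneously diagonalizable via congruence if there is a nonsingular matrix $C$ such that both $C^TAC$ and $C^TBC$ are diagonal. *)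

theory Defs
  imports "HOL-Analysis.Analysis"
begin

definition symmetric_mat :: "real^'n^'n \<Rightarrow> bool" where
  "symmetric_mat A \<longleftrightarrow> transpose A = A"

definition pos_def :: "real^'n^'n \<Rightarrow> bool" where
  "pos_def A \<longleftrightarrow> (\<forall>x. x \<noteq> 0 \<longrightarrow> x \<bullet> (A *v x) > 0)"

definition pos_semidef :: "real^'n^'n \<Rightarrow> bool" where
  "pos_semidef A \<longleftrightarrow> (\<forall>x. x \<bullet> (A *v x) \<ge> 0)"

definition indefinite :: "real^'n^'n \<Rightarrow> bool" where
  "indefinite A \<longleftrightarrow> \<not> pos_semidef A \<and> \<not> pos_semidef (- A)"

definition I_pd :: "real^'n^'n \<Rightarrow> real^'n^'n \<Rightarrow> real set" where
  "I_pd A B = {\<sigma>. pos_def (A + \<sigma> *\<^sub>R B)}"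

definition I_psd :: "real^'n^'n \<Rightarrow> real^'n^'n \<Rightarrow> real set" where
  "I_psd A B = {\<sigma>. pos_semidef (A + \<sigma> *\<^sub>R B)}"

definition Qset :: "real^'n^'n \<Rightarrow> (real^'n) set" where
  "Qset A = {v. v \<bullet> (A *v v) = 0}"

definition Nset :: "real^'n^'n \<Rightarrow> (real^'n) set" where
  "Nset A = {v. A *v v = 0}"

definition diagonal_mat :: "real^'n^'n \<Rightarrow> bool" where
  "diagonal_mat M \<longleftrightarrow> (\<forall>i j. i \<noteq> j \<longrightarrow> M $ i $ j = 0)"

definition simultaneously_diagonalizable_congruence :: "real^'n^'n \<Rightarrow> real^'n^'n \<Rightarrow> bool" where
  "simultaneously_diagonalizable_congruence A B \<longleftrightarrow>
     (\<exists>C::real^'n^'n. invertible C \<and> diagonal_mat (transpose C ** A ** C) \<and> diagonal_mat (transpose C ** B ** C))"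

end

theory Submission
  imports Defs
begin

(* If A + a B and A + b B are both positive semidefinite with a \<noteq> b, a vector isotropic for
   A and B is isotropic for both, hence lies in both kernels and so in N(A) \<inter> N(B); this is (a),
   and (b) follows by applying it to sigma +- e inside the interval.  For (c), M = A + sigma B with
   sigma interior is positive semidefinite with kernel N(A) \<inter> N(B), so M is positive definite on
   the orthogonal complement of its kernel.  There, maximising the Rayleigh quotient of B with
   respect to M and recursing on the M-orthogonal complement yields a basis that is conjugate for
   M and B at once; together with a basis of the kernel it gives the columns of the congruence.
   In the singleton case, a semidefinite B or a positive definite A + s B would allow s to move. *)

lemma symmetric_mat_inner_commute:
  fixes M :: "real^'n^'n"
  assumes "symmetric_mat M"
  shows "x \<bullet> (M *v y) = y \<bullet> (M *v x)"
proof -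
  have "x \<bullet> (M *v y) = (x v* M) \<bullet> y" by (simp add: dot_lmul_matrix)
  also have "x v* M = transpose M *v x" by (simp add: transpose_matrix_vector)
  also have "\<dots> = M *v x" using assms by (simp add: symmetric_mat_def)
  finally show ?thesis by (simp add: inner_commute)
qed

lemma symmetric_mat_combination:
  fixes A B :: "real^'n^'n"
  assumes "symmetric_mat A" "symmetric_mat B"
  shows "symmetric_mat (a *\<^sub>R A + b *\<^sub>R B)"
  using assms unfolding symmetric_mat_def transpose_def by (simp add: vec_eq_iff)

lemma symmetric_mat_pencil:
  fixes A B :: "real^'n^'n"
  assumes "symmetric_mat A" "symmetric_mat B"
  shows "symmetric_mat (A + s *\<^sub>R B)"
  using symmetric_mat_combination[OF assms, of 1 s] by simp

lemma mat_combination_mult_vec: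
  fixes A B :: "real^'n^'n"
  shows "(a *\<^sub>R A + b *\<^sub>R B) *v x = a *\<^sub>R (A *v x) + b *\<^sub>R (B *v x)"
  by (simp add: matrix_vector_mult_add_rdistrib scaleR_matrix_vector_assoc)

lemma mat_pencil_mult_vec:
  fixes A B :: "real^'n^'n"
  shows "(A + s *\<^sub>R B) *v x = A *v x + s *\<^sub>R (B *v x)"
  using mat_combination_mult_vec[of 1 A s B x] by simp

lemma inner_mat_combination:
  fixes A B :: "real^'n^'n"
  shows "y \<bullet> ((a *\<^sub>R A + b *\<^sub>R B) *v x) = a * (y \<bullet> (A *v x)) + b * (y \<bullet> (B *v x))"
  by (simp add: mat_combination_mult_vec inner_add_right)

lemma inner_mat_pencil:
  fixes A B :: "real^'n^'n"
  shows "y \<bullet> ((A + s *\<^sub>R B) *v x) = y \<bullet> (A *v x) + s * (y \<bullet> (B *v x))"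
  by (simp add: mat_pencil_mult_vec inner_add_right)

lemma quadratic_form_add_scaleR:
  fixes M :: "real^'n^'n"
  assumes "symmetric_mat M"
  shows "(x + t *\<^sub>R y) \<bullet> (M *v (x + t *\<^sub>R y)) =
     x \<bullet> (M *v x) + 2 * t * (y \<bullet> (M *v x)) + t\<^sup>2 * (y \<bullet> (M *v y))"
  using symmetric_mat_inner_commute[OF assms, of x y]
  by (simp add: matrix_vector_right_distrib matrix_vector_mult_scaleR inner_add_left
      inner_add_right power2_eq_square algebra_simps)

lemma quadratic_form_normalize:
  fixes M :: "real^'n^'n"
  assumes "z \<noteq> 0"
  shows "z \<bullet> (M *v z) = (norm z)\<^sup>2 * ((z /\<^sub>R norm z) \<bullet> (M *v (z /\<^sub>R norm z)))"
proof -
  have "z \<bullet> (M *v z) = (norm z *\<^sub>R (z /\<^sub>R norm z)) \<bullet> (M *v (norm z *\<^sub>R (z /\<^sub>R norm z)))"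
    using assms by simp
  then show ?thesis
    by (simp only: matrix_vector_mult_scaleR inner_scaleR_left inner_scaleR_right power2_eq_square
        ac_simps)
qed

lemma continuous_on_quadratic_form:
  "continuous_on S (\<lambda>x. x \<bullet> ((M::real^'n^'n) *v x))"
  by (intro continuous_intros matrix_vector_mult_linear_continuous_on)

lemma linear_coeff_eq_0_if_quadratic_nonneg:
  fixes a b :: real
  assumes "\<And>t. 0 \<le> 2 * t * a + t\<^sup>2 * b"
  shows "a = 0"
proof (rule ccontr)
  assume "a \<noteq> 0"
  define c where "c = \<bar>b\<bar> + 1"
  have c: "c > 0" "b \<le> c - 1" unfolding c_def by auto
  \<comment> \<open>at \<open>t = -a/c\<close> the linear term \<open>-2a\<^sup>2/c\<close> beats the quadratic one\<close>
  have "2 * (- a / c) * a + (- a / c)\<^sup>2 * b = a\<^sup>2 * (b - 2 * c) / c\<^sup>2"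
    using c by (simp add: field_simps power2_eq_square)
  also have "\<dots> < 0"
    using \<open>a \<noteq> 0\<close> c by (intro divide_neg_pos mult_pos_neg) auto
  finally show False using assms[of "- a / c"] by linarith
qed

lemma psd_on_subspace_inner_eq_0:
  fixes M :: "real^'n^'n"
  assumes "symmetric_mat M" "subspace S" "\<And>z. z \<in> S \<Longrightarrow> 0 \<le> z \<bullet> (M *v z)"
    and "v \<in> S" "v \<bullet> (M *v v) = 0" "y \<in> S"
  shows "y \<bullet> (M *v v) = 0"
proof (rule linear_coeff_eq_0_if_quadratic_nonneg)
  fix t
  have "v + t *\<^sub>R y \<in> S" using assms by (simp add: subspace_add subspace_scale)
  then show "0 \<le> 2 * t * (y \<bullet> (M *v v)) + t\<^sup>2 * (y \<bullet> (M *v y))"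
    using assms(3) quadratic_form_add_scaleR[OF assms(1), of v t y] assms(5) by fastforce
qed

lemma pos_semidef_null:
  fixes M :: "real^'n^'n"
  assumes "symmetric_mat M" "pos_semidef M" "v \<bullet> (M *v v) = 0"
  shows "M *v v = 0"
  using psd_on_subspace_inner_eq_0[OF assms(1) subspace_UNIV _ _ assms(3), of "M *v v"] assms(2)
  by (simp add: pos_semidef_def)

lemma pos_def_imp_pos_semidef: "pos_def M \<Longrightarrow> pos_semidef M"
  unfolding pos_def_def pos_semidef_def by (metis inner_zero_left less_eq_real_def)

lemma mem_I_psd_iff:
  "\<sigma> \<in> I_psd A B \<longleftrightarrow> (\<forall>x. 0 \<le> x \<bullet> (A *v x) + \<sigma> * (x \<bullet> (B *v x)))"
  unfolding I_psd_def pos_semidef_def inner_mat_pencil by simp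

lemma is_interval_I_psd: "is_interval (I_psd A B)"
  unfolding is_interval_convex_1
proof (rule convexI)
  fix s t u v :: real
  assume s: "s \<in> I_psd A B" and t: "t \<in> I_psd A B" and "0 \<le> u" "0 \<le> v" "u + v = 1"
  have "0 \<le> x \<bullet> (A *v x) + (u * s + v * t) * (x \<bullet> (B *v x))" for x
  proof -
    have "x \<bullet> (A *v x) + (u * s + v * t) * (x \<bullet> (B *v x)) =
        u * (x \<bullet> (A *v x) + s * (x \<bullet> (B *v x))) + v * (x \<bullet> (A *v x) + t * (x \<bullet> (B *v x)))"
      using \<open>u + v = 1\<close> by (simp add: algebra_simps flip: distrib_right)
    also have "\<dots> \<ge> 0"
      using s t \<open>0 \<le> u\<close> \<open>0 \<le> v\<close> unfolding mem_I_psd_iff by simp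
    finally show ?thesis .
  qed
  then show "u *\<^sub>R s + v *\<^sub>R t \<in> I_psd A B"
    unfolding mem_I_psd_iff by simp
qed

lemma pos_def_pencil_perturb:
  fixes A B :: "real^'n^'n"
  assumes "pos_def (A + s *\<^sub>R B)"
  obtains e where "e > 0" "pos_def (A + (s + e) *\<^sub>R B)"
proof -
  let ?S = "sphere (0::real^'n) 1"
  obtain b :: "real^'n" where "b \<in> Basis" using nonempty_Basis by blast
  then have "b \<in> ?S" by simp
  then have ne: "?S \<noteq> {}" by blast
  obtain u0 where "u0 \<in> ?S" and
    u0: "\<And>y. y \<in> ?S \<Longrightarrow> u0 \<bullet> ((A + s *\<^sub>R B) *v u0) \<le> y \<bullet> ((A + s *\<^sub>R B) *v y)"
    using continuous_attains_inf[OF compact_sphere ne continuous_on_quadratic_form] by blast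
  define m where "m = u0 \<bullet> ((A + s *\<^sub>R B) *v u0)"
  have "u0 \<noteq> 0" using \<open>u0 \<in> ?S\<close> by auto
  then have "m > 0" using assms unfolding pos_def_def m_def by blast
  have "continuous_on ?S (\<lambda>x. \<bar>x \<bullet> (B *v x)\<bar>)"
    by (intro continuous_intros continuous_on_quadratic_form)
  then obtain u1 where u1: "\<And>y. y \<in> ?S \<Longrightarrow> \<bar>y \<bullet> (B *v y)\<bar> \<le> \<bar>u1 \<bullet> (B *v u1)\<bar>"
    using continuous_attains_sup[OF compact_sphere ne] by blast
  define K where "K = \<bar>u1 \<bullet> (B *v u1)\<bar>"
  define e where "e = m / (K + 1)"
  have "K \<ge> 0" unfolding K_def by simp
  then have "e > 0" "e * K < m" unfolding e_def using \<open>m > 0\<close> by (simp_all add: field_simps)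
  have "0 < x \<bullet> ((A + (s + e) *\<^sub>R B) *v x)" if "x \<noteq> 0" for x
  proof -
    define u where "u = x /\<^sub>R norm x"
    have "u \<in> ?S" unfolding u_def using that by simp
    then have "m \<le> u \<bullet> (A *v u) + s * (u \<bullet> (B *v u))" "- K \<le> u \<bullet> (B *v u)"
      using u0[of u] u1[of u] unfolding m_def K_def inner_mat_pencil by auto
    then have "e * (- K) \<le> e * (u \<bullet> (B *v u))"
      using \<open>e > 0\<close> by (intro mult_left_mono) auto
    then have "0 < u \<bullet> ((A + (s + e) *\<^sub>R B) *v u)"
      using \<open>m \<le> _\<close> \<open>e * K < m\<close> unfolding inner_mat_pencil distrib_right by linarith
    then show ?thesis
      using quadratic_form_normalize[OF that] that unfolding u_def by simp
  qed
  then show ?thesis using that \<open>e > 0\<close> unfolding pos_def_def by blast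
qed

lemma indefinite_if_I_psd_singleton:
  assumes "I_psd A B = {s}"
  shows "indefinite B"
  unfolding indefinite_def
proof (intro conjI notI)
  have s: "0 \<le> x \<bullet> (A *v x) + s * (x \<bullet> (B *v x))" for x
    using assms mem_I_psd_iff by blast
  show False if "pos_semidef B"
  proof -
    have "0 \<le> x \<bullet> (B *v x)" for x using that unfolding pos_semidef_def by blast
    then have "0 \<le> x \<bullet> (A *v x) + (s + 1) * (x \<bullet> (B *v x))" for x
      using s[of x] unfolding distrib_right by (smt (verit))
    then have "s + 1 \<in> I_psd A B" unfolding mem_I_psd_iff by blast
    then show False using assms by simp
  qed
  show False if "pos_semidef (- B)"
  proof -
    have "(- B) *v x = - (B *v x)" for x
      by (simp add: vec_eq_iff matrix_vector_mult_def sum_negf)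
    then have "x \<bullet> (B *v x) \<le> 0" for x
      using that unfolding pos_semidef_def by (metis inner_minus_right neg_0_le_iff_le)
    then have "0 \<le> x \<bullet> (A *v x) + (s - 1) * (x \<bullet> (B *v x))" for x
      using s[of x] unfolding left_diff_distrib by (smt (verit))
    then have "s - 1 \<in> I_psd A B" unfolding mem_I_psd_iff by blast
    then show False using assms by simp
  qed
qed

lemma I_pd_empty_if_I_psd_singleton:
  fixes A B :: "real^'n^'n"
  assumes "I_psd A B = {s}"
  shows "I_pd A B = {}"
proof (rule ccontr)
  assume "I_pd A B \<noteq> {}"
  then obtain t where "pos_def (A + t *\<^sub>R B)" unfolding I_pd_def by blast
  moreover obtain e where "e > 0" "pos_def (A + (t + e) *\<^sub>R B)"
    using pos_def_pencil_perturb[OF calculation] by blast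
  ultimately have "t \<in> I_psd A B" "t + e \<in> I_psd A B"
    unfolding I_psd_def by (auto intro: pos_def_imp_pos_semidef)
  then show False using assms \<open>e > 0\<close> by simp
qed

lemma Nset_Int_if_two_pencil_quadratic_forms_eq_0:
  fixes A B :: "real^'n^'n"
  assumes "symmetric_mat A" "symmetric_mat B"
    and "a \<in> I_psd A B" "b \<in> I_psd A B" "a \<noteq> b"
    and "v \<bullet> ((A + a *\<^sub>R B) *v v) = 0" "v \<bullet> ((A + b *\<^sub>R B) *v v) = 0"
  shows "v \<in> Nset A \<inter> Nset B"
proof -
  have "(A + a *\<^sub>R B) *v v = 0" "(A + b *\<^sub>R B) *v v = 0"
    using assms(3-7) pos_semidef_null[OF symmetric_mat_pencil[OF assms(1,2)]]
    unfolding I_psd_def by simp_all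
  then have "A *v v + a *\<^sub>R (B *v v) = 0" "A *v v + b *\<^sub>R (B *v v) = 0"
    unfolding mat_pencil_mult_vec by auto
  moreover have "(a - b) *\<^sub>R (B *v v) = (A *v v + a *\<^sub>R (B *v v)) - (A *v v + b *\<^sub>R (B *v v))"
    by (simp add: algebra_simps)
  ultimately have "(a - b) *\<^sub>R (B *v v) = 0" by simp
  then have "B *v v = 0" using \<open>a \<noteq> b\<close> by simp
  with \<open>A *v v + a *\<^sub>R (B *v v) = 0\<close> show ?thesis unfolding Nset_def by simp
qed

lemma Qset_Int_eq_Nset_Int:
  fixes A B :: "real^'n^'n"
  assumes "symmetric_mat A" "symmetric_mat B"
    and "a \<in> I_psd A B" "b \<in> I_psd A B" "a \<noteq> b"
  shows "Qset A \<inter> Qset B = Nset A \<inter> Nset B"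
proof
  show "Qset A \<inter> Qset B \<subseteq> Nset A \<inter> Nset B"
    using Nset_Int_if_two_pencil_quadratic_forms_eq_0[OF assms]
    unfolding Qset_def inner_mat_pencil by auto
  show "Nset A \<inter> Nset B \<subseteq> Qset A \<inter> Qset B"
    unfolding Nset_def Qset_def by auto
qed

lemma Nset_pencil_eq_if_interior:
  fixes A B :: "real^'n^'n"
  assumes "symmetric_mat A" "symmetric_mat B" "\<sigma> \<in> interior (I_psd A B)"
  shows "Nset (A + \<sigma> *\<^sub>R B) = Nset A \<inter> Nset B"
proof
  obtain e where "e > 0" "ball \<sigma> e \<subseteq> I_psd A B"
    using assms(3) mem_interior by blast
  moreover have "\<sigma> + e/2 \<in> ball \<sigma> e" "\<sigma> - e/2 \<in> ball \<sigma> e"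
    using \<open>e > 0\<close> by (simp_all add: dist_real_def)
  ultimately have plus: "\<sigma> + e/2 \<in> I_psd A B" and minus: "\<sigma> - e/2 \<in> I_psd A B"
    by blast+
  have "\<sigma> + e/2 \<noteq> \<sigma> - e/2" using \<open>e > 0\<close> by simp
  note Qset_eq = Qset_Int_eq_Nset_Int[OF assms(1,2) plus minus this]
  show "Nset (A + \<sigma> *\<^sub>R B) \<subseteq> Nset A \<inter> Nset B"
  proof
    fix v assume "v \<in> Nset (A + \<sigma> *\<^sub>R B)"
    then have q: "v \<bullet> (A *v v) + \<sigma> * (v \<bullet> (B *v v)) = 0"
      unfolding Nset_def using inner_mat_pencil[of v A \<sigma> B v] by simp
    have "0 \<le> v \<bullet> (A *v v) + (\<sigma> + e/2) * (v \<bullet> (B *v v))"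
      "0 \<le> v \<bullet> (A *v v) + (\<sigma> - e/2) * (v \<bullet> (B *v v))"
      using plus minus unfolding mem_I_psd_iff by blast+
    then have "0 \<le> (e/2) * (v \<bullet> (B *v v))" "0 \<le> - ((e/2) * (v \<bullet> (B *v v)))"
      using q unfolding distrib_right left_diff_distrib by linarith+
    then have "(e/2) * (v \<bullet> (B *v v)) = 0" by linarith
    then have "v \<bullet> (B *v v) = 0" using \<open>e > 0\<close> by simp
    with q have "v \<in> Qset A \<inter> Qset B" unfolding Qset_def by simp
    then show "v \<in> Nset A \<inter> Nset B" using Qset_eq by simp
  qed
  show "Nset A \<inter> Nset B \<subseteq> Nset (A + \<sigma> *\<^sub>R B)"
    unfolding Nset_def by (auto simp: mat_pencil_mult_vec)
qed

lemma rayleigh_quotient_attains_max: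
  fixes M C :: "real^'n^'n"
  assumes S: "subspace S" and "x0 \<in> S" "x0 \<noteq> 0"
    and pos: "\<And>x. x \<in> S \<Longrightarrow> x \<noteq> 0 \<Longrightarrow> 0 < x \<bullet> (M *v x)"
  obtains x \<rho> where "x \<in> S" "x \<noteq> 0" "x \<bullet> (C *v x) = \<rho> * (x \<bullet> (M *v x))"
    "\<And>z. z \<in> S \<Longrightarrow> z \<bullet> (C *v z) \<le> \<rho> * (z \<bullet> (M *v z))"
proof -
  define T where "T = S \<inter> sphere 0 1"
  define g where "g x = (x \<bullet> (C *v x)) / (x \<bullet> (M *v x))" for x
  have Tpos: "0 < x \<bullet> (M *v x)" if "x \<in> T" for x
  proof -
    have "x \<in> S" "x \<noteq> 0" using that unfolding T_def by auto
    then show ?thesis by (rule pos)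
  qed
  have "compact T" unfolding T_def by (intro closed_Int_compact closed_subspace S compact_sphere)
  moreover have "x0 /\<^sub>R norm x0 \<in> T" using assms(2,3) S unfolding T_def by (simp add: subspace_scale)
  then have "T \<noteq> {}" by blast
  moreover have "continuous_on T g"
    unfolding g_def
  proof (intro continuous_on_divide continuous_on_quadratic_form ballI)
    show "x \<bullet> (M *v x) \<noteq> 0" if "x \<in> T" for x using Tpos[OF that] by simp
  qed
  ultimately have "\<exists>x\<in>T. \<forall>y\<in>T. g y \<le> g x" by (rule continuous_attains_sup)
  then obtain x where "x \<in> T" and xmax: "\<And>y. y \<in> T \<Longrightarrow> g y \<le> g x" by blast
  have bound: "z \<bullet> (C *v z) \<le> g x * (z \<bullet> (M *v z))" if "z \<in> S" for z
  proof (cases "z = 0")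
    case False
    define u where "u = z /\<^sub>R norm z"
    have "u \<in> T" unfolding T_def u_def using that S False by (simp add: subspace_scale)
    then have "u \<bullet> (C *v u) \<le> g x * (u \<bullet> (M *v u))"
      using xmax[of u] Tpos[of u] unfolding g_def by (simp add: divide_le_eq)
    then have "(norm z)\<^sup>2 * (u \<bullet> (C *v u)) \<le> (norm z)\<^sup>2 * (g x * (u \<bullet> (M *v u)))"
      by (rule mult_left_mono) simp
    then show ?thesis
      using quadratic_form_normalize[OF False, of C] quadratic_form_normalize[OF False, of M]
      unfolding u_def by (simp add: mult.left_commute)
  qed simp
  have "x \<in> S" "x \<noteq> 0" using \<open>x \<in> T\<close> unfolding T_def by auto
  moreover have "x \<bullet> (C *v x) = g x * (x \<bullet> (M *v x))"
    using Tpos[OF \<open>x \<in> T\<close>] unfolding g_def by simp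
  ultimately show ?thesis using that bound by blast
qed

lemma exists_generalized_eigenvector_on_subspace:
  fixes M C :: "real^'n^'n"
  assumes "symmetric_mat M" "symmetric_mat C"
    and S: "subspace S" and "x0 \<in> S" "x0 \<noteq> 0"
    and "\<And>x. x \<in> S \<Longrightarrow> x \<noteq> 0 \<Longrightarrow> 0 < x \<bullet> (M *v x)"
  obtains x \<rho> where "x \<in> S" "x \<noteq> 0" "\<And>y. y \<in> S \<Longrightarrow> y \<bullet> (C *v x) = \<rho> * (y \<bullet> (M *v x))"
proof -
  obtain x \<rho> where x: "x \<in> S" "x \<noteq> 0" "x \<bullet> (C *v x) = \<rho> * (x \<bullet> (M *v x))"
    and max: "\<And>z. z \<in> S \<Longrightarrow> z \<bullet> (C *v z) \<le> \<rho> * (z \<bullet> (M *v z))"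
    using rayleigh_quotient_attains_max[OF assms(3-6)] by blast
  \<comment> \<open>\<open>\<rho> M - C\<close> is positive semidefinite on \<open>S\<close> and its form vanishes at the maximiser \<open>x\<close>\<close>
  define D where "D = \<rho> *\<^sub>R M + (-1) *\<^sub>R C"
  have D: "y \<bullet> (D *v z) = \<rho> * (y \<bullet> (M *v z)) - y \<bullet> (C *v z)" for y z
    unfolding D_def inner_mat_combination by simp
  have "y \<bullet> (D *v x) = 0" if "y \<in> S" for y
  proof (rule psd_on_subspace_inner_eq_0[OF _ S _ x(1) _ that])
    show "symmetric_mat D" unfolding D_def by (rule symmetric_mat_combination[OF assms(1,2)])
  qed (use max x(3) in \<open>simp_all add: D\<close>)
  then have "y \<bullet> (C *v x) = \<rho> * (y \<bullet> (M *v x))" if "y \<in> S" for y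
    using that by (simp add: D)
  then show ?thesis using that[OF x(1,2)] by blast
qed

lemma dim_Int_hyperplane_less:
  fixes S :: "(real^'n) set"
  assumes "subspace S" "x \<in> S" "u \<bullet> x \<noteq> 0"
  shows "dim (S \<inter> {y. u \<bullet> y = 0}) < dim S"
proof (rule dim_psubset)
  have "subspace (S \<inter> {y. u \<bullet> y = 0})"
    by (intro subspace_inter assms(1) subspace_hyperplane)
  then have "span (S \<inter> {y. u \<bullet> y = 0}) = S \<inter> {y. u \<bullet> y = 0}" "span S = S"
    using assms(1) by simp_all
  then show "span (S \<inter> {y. u \<bullet> y = 0}) \<subset> span S"
    using assms(2,3) by (simp only:) blast
qed

lemma subspace_subset_span_insert_if_hyperplane_subset:
  fixes S :: "(real^'n) set"
  assumes "subspace S" "x \<in> S" "u \<bullet> x \<noteq> 0" "S \<inter> {y. u \<bullet> y = 0} \<subseteq> span U"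
  shows "S \<subseteq> span (insert x U)"
proof
  fix z assume "z \<in> S"
  define c where "c = (u \<bullet> z) / (u \<bullet> x)"
  have "z - c *\<^sub>R x \<in> S \<inter> {y. u \<bullet> y = 0}"
    using assms(1-3) \<open>z \<in> S\<close> by (simp add: subspace_diff subspace_scale inner_diff_right c_def)
  then have "z - c *\<^sub>R x \<in> span (insert x U)"
    using assms(4) span_mono[of U "insert x U"] by blast
  moreover have "c *\<^sub>R x \<in> span (insert x U)"
    by (simp add: span_base span_scale)
  ultimately show "z \<in> span (insert x U)"
    using span_add by fastforce
qed

lemma exists_conjugate_basis_of_subspace:
  fixes M C :: "real^'n^'n"
  assumes "symmetric_mat M" "symmetric_mat C"
  shows "subspace S \<Longrightarrow> (\<And>x. x \<in> S \<Longrightarrow> x \<noteq> 0 \<Longrightarrow> 0 < x \<bullet> (M *v x)) \<Longrightarrow>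
    \<exists>U. U \<subseteq> S \<and> independent U \<and> S \<subseteq> span U \<and>
      pairwise (\<lambda>x y. x \<bullet> (M *v y) = 0 \<and> x \<bullet> (C *v y) = 0) U"
proof (induction "dim S" arbitrary: S rule: less_induct)
  case less
  show ?case
  proof (cases "S \<subseteq> {0}")
    case True
    then show ?thesis by (intro exI[of _ "{}"]) (auto simp: independent_empty)
  next
    case False
    then obtain x0 where "x0 \<in> S" "x0 \<noteq> 0" by auto
    then obtain x \<rho> where x: "x \<in> S" "x \<noteq> 0"
      and eig: "\<And>y. y \<in> S \<Longrightarrow> y \<bullet> (C *v x) = \<rho> * (y \<bullet> (M *v x))"
      using exists_generalized_eigenvector_on_subspace[OF assms less.prems(1) _ _ less.prems(2)]
      by blast
    \<comment> \<open>the \<open>M\<close>-orthogonal complement of \<open>x\<close> in \<open>S\<close> is \<open>C\<close>-orthogonal to \<open>x\<close> as well\<close>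
    define S' where "S' = S \<inter> {y. (M *v x) \<bullet> y = 0}"
    have Mx: "(M *v x) \<bullet> x \<noteq> 0" using less.prems(2)[OF x] by (simp add: inner_commute)
    have "subspace S'" unfolding S'_def by (intro subspace_inter less.prems(1) subspace_hyperplane)
    moreover have "dim S' < dim S"
      unfolding S'_def by (rule dim_Int_hyperplane_less[OF less.prems(1) x(1) Mx])
    ultimately obtain U' where U': "U' \<subseteq> S'" "independent U'" "S' \<subseteq> span U'"
      "pairwise (\<lambda>x y. x \<bullet> (M *v y) = 0 \<and> x \<bullet> (C *v y) = 0) U'"
      using less.hyps less.prems(2) unfolding S'_def by blast
    have "x \<notin> span U'"
      using span_minimal[OF U'(1) \<open>subspace S'\<close>] Mx unfolding S'_def by auto
    then have "independent (insert x U')" by (rule independent_insertI[OF _ U'(2)])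
    moreover have "S \<subseteq> span (insert x U')"
      using subspace_subset_span_insert_if_hyperplane_subset[OF less.prems(1) x(1) Mx] U'(3)
      unfolding S'_def by blast
    moreover have "y \<bullet> (M *v x) = 0 \<and> x \<bullet> (M *v y) = 0 \<and> y \<bullet> (C *v x) = 0 \<and> x \<bullet> (C *v y) = 0"
      if "y \<in> U'" for y
    proof -
      have "y \<in> S" "(M *v x) \<bullet> y = 0" using that U'(1) unfolding S'_def by auto
      then have "y \<bullet> (M *v x) = 0" "y \<bullet> (C *v x) = 0"
        using eig[of y] by (simp_all add: inner_commute)
      then show ?thesis
        using symmetric_mat_inner_commute[OF assms(1), of x y]
          symmetric_mat_inner_commute[OF assms(2), of x y] by simp
    qed
    then have "pairwise (\<lambda>x y. x \<bullet> (M *v y) = 0 \<and> x \<bullet> (C *v y) = 0) (insert x U')"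
      using U'(4) unfolding pairwise_insert by blast
    moreover have "insert x U' \<subseteq> S" using x U'(1) unfolding S'_def by blast
    ultimately show ?thesis by blast
  qed
qed

lemma subspace_Nset: "subspace (Nset M)"
  unfolding Nset_def subspace_def by (simp add: matrix_vector_right_distrib matrix_vector_mult_scaleR)

lemma pos_semidef_pos_on_orthogonal_Nset:
  fixes M :: "real^'n^'n"
  assumes "symmetric_mat M" "pos_semidef M"
    and "\<forall>k\<in>Nset M. orthogonal k x" "x \<noteq> 0"
  shows "0 < x \<bullet> (M *v x)"
proof (rule ccontr)
  assume "\<not> 0 < x \<bullet> (M *v x)"
  then have "x \<bullet> (M *v x) = 0" using assms(2) unfolding pos_semidef_def by (meson not_le order_antisym)
  then have "x \<in> Nset M" using pos_semidef_null[OF assms(1,2)] unfolding Nset_def by blast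
  then show False using assms(3,4) orthogonal_self by blast
qed

lemma span_Un_eq_UNIV_if_spans_orthogonal_complement:
  fixes K :: "(real^'n) set"
  assumes "subspace K" "K \<subseteq> span BK" "{y. \<forall>k\<in>K. orthogonal k y} \<subseteq> span BW"
  shows "span (BK \<union> BW) = UNIV"
proof -
  have "x \<in> span (BK \<union> BW)" for x
  proof -
    obtain y z where "y \<in> span K" "\<And>w. w \<in> span K \<Longrightarrow> orthogonal z w" "x = y + z"
      using orthogonal_subspace_decomp_exists by blast
    moreover have "y \<in> K" using \<open>y \<in> span K\<close> assms(1) by (metis span_eq_iff)
    moreover have "\<forall>k\<in>K. orthogonal k z"
      using \<open>\<And>w. w \<in> span K \<Longrightarrow> orthogonal z w\<close> span_base orthogonal_commute by blast
    ultimately show ?thesis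
      using assms(2,3) span_mono[of BK "BK \<union> BW"] span_mono[of BW "BK \<union> BW"] span_add by blast
  qed
  then show ?thesis by blast
qed

lemma exists_conjugate_basis_if_pos_semidef:
  fixes M C :: "real^'n^'n"
  assumes symM: "symmetric_mat M" and symC: "symmetric_mat C"
    and "pos_semidef M" and ker: "Nset M \<subseteq> Nset C"
  obtains U where "independent U" "span U = UNIV"
    "pairwise (\<lambda>x y. x \<bullet> (M *v y) = 0 \<and> x \<bullet> (C *v y) = 0) U"
proof -
  define K where "K = Nset M"
  define W where "W = {y. \<forall>k\<in>K. orthogonal k y}"
  have "subspace K" unfolding K_def by (rule subspace_Nset)
  have "subspace W" unfolding W_def by (rule subspace_orthogonal_to_vectors)
  obtain BW where BW: "BW \<subseteq> W" "independent BW" "W \<subseteq> span BW"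
    "pairwise (\<lambda>x y. x \<bullet> (M *v y) = 0 \<and> x \<bullet> (C *v y) = 0) BW"
    using exists_conjugate_basis_of_subspace[OF symM symC \<open>subspace W\<close>]
      pos_semidef_pos_on_orthogonal_Nset[OF symM \<open>pos_semidef M\<close>]
    unfolding W_def K_def by blast
  obtain BK where BK: "BK \<subseteq> K" "independent BK" "K \<subseteq> span BK" "card BK = dim K"
    by (rule basis_exists)
  define U where "U = BK \<union> BW"
  have span: "span U = UNIV"
    unfolding U_def using span_Un_eq_UNIV_if_spans_orthogonal_complement \<open>subspace K\<close> BK(3) BW(3)
    unfolding W_def by blast
  have "finite BK" "finite BW" using BK(2) BW(2) independent_bound by blast+
  then have "finite U" unfolding U_def by blast
  have "card U \<le> card BK + card BW" unfolding U_def by (rule card_Un_le)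
  also have "\<dots> = dim K + dim W"
    using BK(4) dim_span_eq_card_independent[OF BW(2)] BW \<open>subspace W\<close>
    by (metis dim_span span_minimal subset_antisym)
  also have "\<dots> = dim (UNIV :: (real^'n) set)"
    using dim_subspace_orthogonal_to_vectors[OF \<open>subspace K\<close> subspace_UNIV] unfolding W_def by simp
  finally have "independent U"
    using card_le_dim_spanning[of U UNIV] \<open>finite U\<close> span by simp
  moreover have "pairwise (\<lambda>x y. x \<bullet> (M *v y) = 0 \<and> x \<bullet> (C *v y) = 0) U"
  proof -
    have "M *v k = 0" "C *v k = 0" if "k \<in> BK" for k
      using that BK(1) ker unfolding K_def Nset_def by auto
    then show ?thesis
      using BW(4) symmetric_mat_inner_commute[OF symM] symmetric_mat_inner_commute[OF symC]
      unfolding U_def pairwise_def by (metis Un_iff inner_zero_right)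
  qed
  ultimately show ?thesis using that span by blast
qed

lemma congruence_mat_nth:
  fixes A C :: "real^'n^'n"
  shows "(transpose C ** A ** C) $ i $ j = column i C \<bullet> (A *v column j C)"
  by (simp add: matrix_matrix_mult_def matrix_vector_mult_def inner_vec_def column_def
      transpose_def sum_distrib_left sum_distrib_right mult.assoc mult.left_commute) (rule sum.swap)

lemma simultaneously_diagonalizable_congruence_if_conjugate_basis:
  fixes A B :: "real^'n^'n"
  assumes "independent U" "span U = UNIV"
    and conj: "pairwise (\<lambda>x y. x \<bullet> (A *v y) = 0 \<and> x \<bullet> (B *v y) = 0) U"
  shows "simultaneously_diagonalizable_congruence A B"
proof -
  have "finite U" using assms(1) independent_bound by blast
  have "card U = CARD('n)"
    using dim_span_eq_card_independent[OF assms(1)] assms(2) by simp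
  then obtain f where f: "bij_betw f (UNIV :: 'n set) U"
    using finite_same_card_bij[of "UNIV :: 'n set" U] \<open>finite U\<close> by auto
  define C :: "real^'n^'n" where "C = (\<chi> i j. f j $ i)"
  have col: "column j C = f j" for j unfolding C_def column_def by (simp add: vec_eq_iff)
  have "columns C = U"
    using f unfolding columns_def col bij_betw_def by auto
  then have "invertible C"
    using assms(2) matrix_right_invertible_span_columns[of C] invertible_right_inverse[of C]
    by (simp add: span_vec_eq)
  moreover have "diagonal_mat (transpose C ** A ** C)" "diagonal_mat (transpose C ** B ** C)"
    using conj f unfolding diagonal_mat_def congruence_mat_nth col pairwise_def bij_betw_def inj_on_def
    by (metis UNIV_I image_eqI)+
  ultimately show ?thesis
    unfolding simultaneously_diagonalizable_congruence_def by blast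
qed

lemma simultaneously_diagonalizable_congruence_if_pos_semidef_pencil:
  fixes A B :: "real^'n^'n"
  assumes "symmetric_mat A" "symmetric_mat B"
    and "pos_semidef (A + \<sigma> *\<^sub>R B)" "Nset (A + \<sigma> *\<^sub>R B) \<subseteq> Nset B"
  shows "simultaneously_diagonalizable_congruence A B"
proof -
  obtain U where U: "independent U" "span U = UNIV"
    and conj: "pairwise (\<lambda>x y. x \<bullet> ((A + \<sigma> *\<^sub>R B) *v y) = 0 \<and> x \<bullet> (B *v y) = 0) U"
    using exists_conjugate_basis_if_pos_semidef[OF symmetric_mat_pencil[OF assms(1,2)] assms(2-4)] .
  have "pairwise (\<lambda>x y. x \<bullet> (A *v y) = 0 \<and> x \<bullet> (B *v y) = 0) U"
    using conj unfolding pairwise_def inner_mat_pencil by force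
  then show ?thesis
    by (rule simultaneously_diagonalizable_congruence_if_conjugate_basis[OF U])
qed

lemma midpoint_in_interior_if_is_interval:
  fixes S :: "real set"
  assumes "is_interval S" "a \<in> S" "b \<in> S" "a < b"
  shows "(a + b) / 2 \<in> interior S"
proof -
  have "{a..b} \<subseteq> S" using assms(1-3) unfolding is_interval_1 by (meson atLeastAtMost_iff subsetI)
  then have "interior {a..b} \<subseteq> interior S" by (rule interior_mono)
  moreover have "(a + b) / 2 \<in> {a<..<b}" using assms(4) by auto
  ultimately show ?thesis unfolding interior_atLeastAtMost_real by blast
qed

lemma exists_two_points_if_not_singleton:
  fixes S :: "real set"
  assumes "S \<noteq> {}" "\<not> (\<exists>s. S = {s})"
  obtains a b where "a \<in> S" "b \<in> S" "a < b"
proof -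
  obtain x where x: "x \<in> S" using assms(1) by blast
  moreover have "S \<noteq> {x}" using assms(2) by blast
  ultimately obtain y where y: "y \<in> S" "y \<noteq> x" by blast
  show ?thesis
  proof (cases "x < y")
    case True
    then show ?thesis by (rule that[OF x y(1)])
  next
    case False
    then have "y < x" using y(2) by linarith
    then show ?thesis by (rule that[OF y(1) x])
  qed
qed

theorem theorem3:
  fixes A B :: "real^'n^'n"
  assumes "symmetric_mat A" and "symmetric_mat B"
    and "I_psd A B \<noteq> {}"
  shows "((\<exists>s. I_psd A B = {s}) \<longrightarrow> indefinite B \<and> I_pd A B = {})
    \<and> (\<not> (\<exists>s. I_psd A B = {s}) \<longrightarrow>
           is_interval (I_psd A B)
         \<and> Qset A \<inter> Qset B = Nset A \<inter> Nset B
         \<and> (\<forall>\<sigma>\<in>interior (I_psd A B). Nset (A + \<sigma> *\<^sub>R B) = Nset A \<inter> Nset B)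
         \<and> simultaneously_diagonalizable_congruence A B)"
proof (intro conjI impI)
  assume "\<exists>s. I_psd A B = {s}"
  then obtain s where "I_psd A B = {s}" by blast
  then show "indefinite B" "I_pd A B = {}"
    by (rule indefinite_if_I_psd_singleton, rule I_pd_empty_if_I_psd_singleton)
next
  assume "\<not> (\<exists>s. I_psd A B = {s})"
  with assms(3) obtain a b where ab: "a \<in> I_psd A B" "b \<in> I_psd A B" "a < b"
    by (rule exists_two_points_if_not_singleton)
  show "is_interval (I_psd A B)" by (rule is_interval_I_psd)
  show "Qset A \<inter> Qset B = Nset A \<inter> Nset B"
    using Qset_Int_eq_Nset_Int[OF assms(1,2) ab(1,2)] ab(3) by simp
  show kernel: "\<forall>\<sigma>\<in>interior (I_psd A B). Nset (A + \<sigma> *\<^sub>R B) = Nset A \<inter> Nset B"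
    using Nset_pencil_eq_if_interior[OF assms(1,2)] by blast
  have mid: "(a + b) / 2 \<in> interior (I_psd A B)"
    using midpoint_in_interior_if_is_interval[OF is_interval_I_psd ab] .
  then have "pos_semidef (A + ((a + b) / 2) *\<^sub>R B)"
    using interior_subset unfolding I_psd_def by blast
  moreover have "Nset (A + ((a + b) / 2) *\<^sub>R B) \<subseteq> Nset B" using kernel mid by blast
  ultimately show "simultaneously_diagonalizable_congruence A B"
    by (rule simultaneously_diagonalizable_congruence_if_pos_semidef_pencil[OF assms(1,2)])
qed

end
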